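(* Let $\alpha\ge0$ and $0\le\beta<1$. If $f=h+\overline{g}\in\mathcal{W}_{\mathcal{H}}^0(\alpha,\beta)$ and $\phi$ is a normalized convex univalent analytic function in $\mathbb{D}$ (i.e. $\phi(0)=0$, $\phi'(0)=1$, $\phi$ univalent and $\phi(\mathbb{D})$ convex), then $h*\phi+\overline{g*\phi}\in\mathcal{W}_{\mathcal{H}}^0(\alpha,\beta)$.
   Context: Let $\mathbb{D}=\{z\in\mathbb{C}:|z|<1\}$. $\mathcal{H}^0$ denotes the class of harmonic maps $f=h+\overline{g}$ on $\mathbb{D}$, with $h,g$ analytic in $\mathbb{D}$, $h(z)=z+\sum_{n\ge2}a_nz^n$ and $g(z)=\sum_{n\ge2}b_nz^n$. For $\alpha\ge0$, $0\le\beta<1$, $\mathcal{W}_{\mathcal{H}}^0(\alpha,\beta)$ denotes the class of $f=h+\overline{g}\in\mathcal{H}^0$ such that $\Re\big(h'(z)+\alpha zh''(z)-\beta\big)>|g'(z)+\alpha zg''(z)|$ for all $z\in\mathbb{D}$. For analytic $\psi_1(z)=\sum c_nz^n$, $\psi_2(z)=\sum d_nz^n$, the Hadamard product is $(\psi_1*\psi_2)(z)=\sum c_nd_nz^n$. *)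

theory Defs
  imports "HOL-Complex_Analysis.Complex_Analysis"
begin

definition taylor_coeff :: "(complex \<Rightarrow> complex) \<Rightarrow> nat \<Rightarrow> complex" where
  "taylor_coeff f n = (deriv ^^ n) f 0 / of_nat (fact n)"

definition hadamard :: "(complex \<Rightarrow> complex) \<Rightarrow> (complex \<Rightarrow> complex) \<Rightarrow> complex \<Rightarrow> complex" where
  "hadamard f g z = (\<Sum>n. taylor_coeff f n * taylor_coeff g n * z ^ n)"

text \<open>The class W_H^0(alpha,beta), for f = h + conj g given by the pair (h,g).\<close>
definition W_H0 :: "real \<Rightarrow> real \<Rightarrow> (complex \<Rightarrow> complex) \<Rightarrow> (complex \<Rightarrow> complex) \<Rightarrow> bool" where
  "W_H0 \<alpha> \<beta> h g \<longleftrightarrow>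
     h holomorphic_on ball 0 1 \<and> g holomorphic_on ball 0 1 \<and>
     h 0 = 0 \<and> deriv h 0 = 1 \<and> g 0 = 0 \<and> deriv g 0 = 0 \<and>
     (\<forall>z\<in>ball 0 1.
        Re (deriv h z + of_real \<alpha> * z * deriv (deriv h) z - of_real \<beta>)
          > norm (deriv g z + of_real \<alpha> * z * deriv (deriv g) z))"

definition normalized_convex_univalent :: "(complex \<Rightarrow> complex) \<Rightarrow> bool" where
  "normalized_convex_univalent \<phi> \<longleftrightarrow>
     \<phi> holomorphic_on ball 0 1 \<and> \<phi> 0 = 0 \<and> deriv \<phi> 0 = 1 \<and>
     inj_on \<phi> (ball 0 1) \<and> convex (\<phi> ` ball 0 1)"

end

theory Submission
  imports Defs
begin

text \<open>The operator \<open>F \<mapsto> F' + \<alpha> z F''\<close> acts on Taylor coefficients, so its value on \<open>h * \<phi>\<close>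
  is the Hadamard product of its value on \<open>h\<close> with \<open>q(z) = \<phi>(z)/z\<close>, and likewise for \<open>g\<close>.
  For convex univalent \<open>\<phi>\<close> one has \<open>Re q > 1/2\<close> (Marx-Strohhaecker; proved here from Study's
  theorem and Julia's lemma at a boundary point), and a Herglotz-type integral over the circle shows
  that the Hadamard product of a function of positive real part with such a \<open>q\<close> again has positive
  real part. Applied to \<open>F' + \<alpha> z F''\<close> of \<open>h + \<epsilon> g\<close> minus \<open>\<beta>\<close>, for all \<open>|\<epsilon>| \<le> 1\<close>, this
  carries the defining inequality of the class from \<open>(h, g)\<close> to \<open>(h * \<phi>, g * \<phi>)\<close>.\<close>

section \<open>Fourier series on the unit circle\<close>

lemma has_integral_cis_int:
  fixes k :: int
  shows "((\<lambda>t. cis (of_int k * t)) has_integral (if k = 0 then 2*pi else 0)) {0..2*pi}"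
proof (cases "k = 0")
  case True
  then show ?thesis using has_integral_const_real[of "1::complex" 0 "2*pi"]
    by (simp add: scaleR_conv_of_real)
next
  case False
  have "((\<lambda>t. cis (of_int k * t) / (\<i> * of_int k)) has_vector_derivative cis (of_int k * t))
          (at t within {0..2*pi})" for t
  proof -
    have "((\<lambda>t. cis (of_int k * t)) has_vector_derivative (of_int k * (\<i> * cis (of_int k * t))))
            (at t within {0..2*pi})"
      by (auto intro!: derivative_eq_intros simp: has_vector_derivative_def scaleR_conv_of_real mult_ac)
    from has_vector_derivative_divide[OF this, of "\<i> * of_int k"]
    show ?thesis using False by (simp add: field_simps)
  qed
  then have "((\<lambda>t. cis (of_int k * t)) has_integral
               (cis (of_int k * (2*pi)) / (\<i> * of_int k) - cis (of_int k * 0) / (\<i> * of_int k))) {0..2*pi}"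
    by (intro fundamental_theorem_of_calculus) auto
  moreover have "cis (of_int k * (2*pi)) = 1"
    using cis_multiple_2pi[of "of_int k"] by (simp add: mult_ac)
  ultimately show ?thesis using False by simp
qed

lemma has_integral_suminf_Weierstrass:
  fixes f :: "nat \<Rightarrow> real \<Rightarrow> complex"
  assumes cont: "\<And>n. continuous_on {a..b} (f n)"
    and bound: "\<And>n t. t \<in> {a..b} \<Longrightarrow> norm (f n t) \<le> M n" and "summable M"
    and int: "\<And>n. (f n has_integral I n) {a..b}"
  shows "((\<lambda>t. \<Sum>n. f n t) has_integral (\<Sum>n. I n)) {a..b}"
proof -
  have "uniform_limit {a..b} (\<lambda>n t. \<Sum>i<n. f i t) (\<lambda>t. \<Sum>i. f i t) sequentially"
    by (rule Weierstrass_m_test[OF bound \<open>summable M\<close>])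
  moreover have "\<And>n. continuous_on {a..b} (\<lambda>t. \<Sum>i<n. f i t)"
    by (intro continuous_on_sum cont)
  ultimately obtain I' J where I': "\<And>n. ((\<lambda>t. \<Sum>i<n. f i t) has_integral I' n) {a..b}"
    and J: "((\<lambda>t. \<Sum>i. f i t) has_integral J) {a..b}" and lim: "I' \<longlonglongrightarrow> J"
    by (rule uniform_limit_integral) auto
  have "I' n = (\<Sum>i<n. I i)" for n
    by (rule has_integral_unique[OF I'[of n]]) (intro has_integral_sum int, simp)
  then have "I' = (\<lambda>n. \<Sum>i<n. I i)" by auto
  with lim have "I sums J" unfolding sums_def by simp
  with J show ?thesis by (simp add: sums_iff)
qed

lemma summable_powser_circle:
  fixes v :: "nat \<Rightarrow> complex"
  assumes "summable (\<lambda>m. norm (v m))" and "norm e \<le> 1"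
  shows "summable (\<lambda>m. v m * e ^ m)"
  by (rule summable_norm_cancel, rule summable_comparison_test[OF _ assms(1)])
     (use assms(2) in \<open>auto simp: norm_mult norm_power mult_left_le power_le_one\<close>)

lemma norm_powser_circle_le:
  fixes v :: "nat \<Rightarrow> complex"
  assumes sv: "summable (\<lambda>m. norm (v m))" and e: "norm e \<le> 1"
  shows "norm (\<Sum>m. v m * e ^ m) \<le> (\<Sum>m. norm (v m))"
proof -
  have le: "norm (v m * e ^ m) \<le> norm (v m)" for m
    using e by (simp add: norm_mult norm_power mult_left_le power_le_one)
  have s: "summable (\<lambda>m. norm (v m * e ^ m))"
    by (intro summable_comparison_test[OF _ sv]) (use le in auto)
  have "norm (\<Sum>m. v m * e ^ m) \<le> (\<Sum>m. norm (v m * e ^ m))" by (rule summable_norm[OF s])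
  also have "\<dots> \<le> (\<Sum>m. norm (v m))" by (rule suminf_le[OF le s sv])
  finally show ?thesis .
qed

lemma continuous_on_powser_circle:
  fixes v :: "nat \<Rightarrow> complex" and e :: "real \<Rightarrow> complex"
  assumes sv: "summable (\<lambda>m. norm (v m))" and "continuous_on A e"
    and "\<And>t. t \<in> A \<Longrightarrow> norm (e t) \<le> 1"
  shows "continuous_on A (\<lambda>t. \<Sum>m. v m * e t ^ m)"
proof (rule uniform_limit_theorem)
  show "uniform_limit A (\<lambda>n t. \<Sum>i<n. v i * e t ^ i) (\<lambda>t. \<Sum>i. v i * e t ^ i) sequentially"
    by (rule Weierstrass_m_test[OF _ sv])
       (use assms(3) in \<open>auto simp: norm_mult norm_power mult_left_le power_le_one\<close>)
  show "\<forall>\<^sub>F n in sequentially. continuous_on A (\<lambda>t. \<Sum>i<n. v i * e t ^ i)"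
    by (intro always_eventually allI continuous_intros assms(2))
qed simp

lemma cis_power_mult_cis_power: "cis a ^ m * cis b ^ n = cis (real m * a + real n * b)"
  by (simp add: Complex.DeMoivre cis_mult)

lemma has_integral_cis_series:
  fixes v :: "nat \<Rightarrow> complex" and \<kappa> :: "nat \<Rightarrow> int"
  assumes sv: "summable (\<lambda>m. norm (v m))"
  shows "((\<lambda>t. \<Sum>m. v m * cis (of_int (\<kappa> m) * t)) has_integral
           (\<Sum>m. v m * (if \<kappa> m = 0 then 2*pi else 0))) {0..2*pi}"
proof (rule has_integral_suminf_Weierstrass[OF _ _ sv])
  show "((\<lambda>t. v m * cis (of_int (\<kappa> m) * t)) has_integral v m * (if \<kappa> m = 0 then 2*pi else 0))
          {0..2*pi}" for m
    by (rule has_integral_mult_right[OF has_integral_cis_int])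
  show "continuous_on {0..2*pi} (\<lambda>t. v m * cis (of_int (\<kappa> m) * t))" for m
    by (intro continuous_intros)
  show "norm (v m * cis (of_int (\<kappa> m) * t)) \<le> norm (v m)" for m t
    by (simp add: norm_mult)
qed

lemma has_integral_fourier_coeff:
  fixes v :: "nat \<Rightarrow> complex"
  assumes sv: "summable (\<lambda>m. norm (v m))"
  shows "((\<lambda>t. cis (-t) ^ n * (\<Sum>m. v m * cis t ^ m)) has_integral 2*pi * v n) {0..2*pi}"
proof -
  have "cis (-t) ^ n * (\<Sum>m. v m * cis t ^ m) = (\<Sum>m. v m * cis (of_int (int m - int n) * t))" for t
  proof -
    have "cis (-t) ^ n * (\<Sum>m. v m * cis t ^ m) = (\<Sum>m. cis (-t) ^ n * (v m * cis t ^ m))"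
      by (intro suminf_mult[symmetric] summable_powser_circle[OF sv]) simp
    also have "\<dots> = (\<Sum>m. v m * cis (of_int (int m - int n) * t))"
      using cis_power_mult_cis_power[of t _ "-t" n] by (simp add: algebra_simps)
    finally show ?thesis .
  qed
  moreover have "(\<lambda>m. v m * (if int m - int n = 0 then 2*pi else 0)) = (\<lambda>m. if m = n then 2*pi * v n else 0)"
    by (auto simp: fun_eq_iff)
  then have "(\<Sum>m. v m * (if int m - int n = 0 then 2*pi else 0)) = 2*pi * v n"
    using sums_single[of n "\<lambda>_. 2*pi * v n"] by (simp add: sums_iff)
  ultimately show ?thesis using has_integral_cis_series[OF sv, of "\<lambda>m. int m - int n"] by simp
qed

lemma has_integral_fourier_coeff_conj:
  fixes v :: "nat \<Rightarrow> complex"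
  assumes sv: "summable (\<lambda>m. norm (v m))"
  shows "((\<lambda>t. cis (-t) ^ n * (\<Sum>m. v m * cis (-t) ^ m)) has_integral
           (if n = 0 then 2*pi * v 0 else 0)) {0..2*pi}"
proof -
  have "cis (-t) ^ n * (\<Sum>m. v m * cis (-t) ^ m) = (\<Sum>m. v m * cis (of_int (- int m - int n) * t))" for t
  proof -
    have "cis (-t) ^ n * (\<Sum>m. v m * cis (-t) ^ m) = (\<Sum>m. cis (-t) ^ n * (v m * cis (-t) ^ m))"
      by (intro suminf_mult[symmetric] summable_powser_circle[OF sv]) simp
    also have "\<dots> = (\<Sum>m. v m * cis (of_int (- int m - int n) * t))"
      using cis_power_mult_cis_power[of "-t" _ "-t" n] by (simp add: algebra_simps)
    finally show ?thesis .
  qed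
  moreover have "(\<lambda>m. v m * (if - int m - int n = 0 then 2*pi else 0))
                  = (\<lambda>m. if m = 0 then (if n = 0 then 2*pi * v 0 else 0) else 0)"
    by (auto simp: fun_eq_iff)
  then have "(\<Sum>m. v m * (if - int m - int n = 0 then 2*pi else 0)) = (if n = 0 then 2*pi * v 0 else 0)"
    using sums_single[of 0 "\<lambda>_. if n = 0 then 2*pi * v 0 else 0"] by (simp add: sums_iff)
  ultimately show ?thesis using has_integral_cis_series[OF sv, of "\<lambda>m. - int m - int n"] by simp
qed

section \<open>Hadamard products of functions with positive real part\<close>

lemma has_integral_powser_circle_mult:
  fixes u :: "nat \<Rightarrow> complex" and B :: "real \<Rightarrow> complex"
  assumes su: "summable (\<lambda>n. norm (u n))" and B: "continuous_on {0..2*pi} B"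
    and bound: "\<And>t. t \<in> {0..2*pi} \<Longrightarrow> norm (B t) \<le> C"
    and J: "\<And>n. ((\<lambda>t. cis (-t) ^ n * B t) has_integral J n) {0..2*pi}"
  shows "((\<lambda>t. (\<Sum>n. u n * cis (-t) ^ n) * B t) has_integral (\<Sum>n. u n * J n)) {0..2*pi}"
proof -
  have "(\<Sum>n. u n * cis (-t) ^ n) * B t = (\<Sum>n. u n * (cis (-t) ^ n * B t))" for t
    using suminf_mult2[OF summable_powser_circle[OF su], of "cis (-t)" "B t"] by (simp add: mult.assoc)
  moreover have "((\<lambda>t. \<Sum>n. u n * (cis (-t) ^ n * B t)) has_integral (\<Sum>n. u n * J n)) {0..2*pi}"
  proof (rule has_integral_suminf_Weierstrass)
    show "norm (u n * (cis (-t) ^ n * B t)) \<le> norm (u n) * C" if "t \<in> {0..2*pi}" for n t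
      using bound[OF that] by (simp add: norm_mult norm_power mult_left_mono)
  qed (auto intro!: continuous_intros B summable_mult2 su has_integral_mult_right J)
  ultimately show ?thesis by simp
qed

lemma summable_mult_of_summable_norm:
  fixes u v :: "nat \<Rightarrow> 'a :: {real_normed_algebra, banach}"
  assumes su: "summable (\<lambda>n. norm (u n))" and sv: "summable (\<lambda>n. norm (v n))"
  shows "summable (\<lambda>n. u n * v n)"
proof (rule summable_norm_cancel, rule summable_comparison_test)
  show "summable (\<lambda>n. norm (u n) * (\<Sum>m. norm (v m)))" by (rule summable_mult2[OF su])
  have "norm (v n) \<le> (\<Sum>m. norm (v m))" for n
    using sum_le_suminf[OF sv, of "{n}"] by simp
  then show "\<exists>N. \<forall>n\<ge>N. norm (norm (u n * v n)) \<le> norm (u n) * (\<Sum>m. norm (v m))"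
    by (auto intro!: order_trans[OF norm_mult_ineq] mult_left_mono)
qed

text \<open>The Fourier-analytic form of the Hadamard product: integrating the boundary values of the first
  series against the kernel \<open>2 Re Q - 1\<close> built from the second one picks out \<open>\<Sum> u\<^sub>n v\<^sub>n\<close>,
  because \<open>Q\<close> contributes the coefficients \<open>v\<^sub>n\<close> and \<open>cnj Q - 1\<close> only a constant term that cancels.\<close>

lemma has_integral_hadamard_kernel:
  fixes u v :: "nat \<Rightarrow> complex"
  assumes su: "summable (\<lambda>n. norm (u n))" and sv: "summable (\<lambda>n. norm (v n))" and v0: "v 0 = 1"
  shows "((\<lambda>t. (\<Sum>n. u n * cis (-t) ^ n) * of_real (2 * Re (\<Sum>n. v n * cis t ^ n) - 1))
           has_integral 2*pi * (\<Sum>n. u n * v n)) {0..2*pi}"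
proof -
  define P where "P t = (\<Sum>n. u n * cis (-t) ^ n)" for t
  define Q where "Q t = (\<Sum>n. v n * cis t ^ n)" for t
  define Qc where "Qc t = (\<Sum>n. cnj (v n) * cis (-t) ^ n)" for t
  have svc: "summable (\<lambda>n. norm (cnj (v n)))" using sv by simp
  have Qc_eq: "Qc t = cnj (Q t)" for t
  proof -
    have "(\<lambda>n. cnj (v n * cis t ^ n)) sums cnj (Q t)"
      unfolding Q_def by (intro sums_cnj[THEN iffD2] summable_sums summable_powser_circle[OF sv]) simp
    then show ?thesis by (simp add: Qc_def sums_iff cis_cnj)
  qed
  have "((\<lambda>t. P t * Q t) has_integral (\<Sum>n. u n * (2*pi * v n))) {0..2*pi}"
    unfolding P_def Q_def
    by (rule has_integral_powser_circle_mult[OF su _ norm_powser_circle_le[OF sv]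
          has_integral_fourier_coeff[OF sv]])
       (auto intro!: continuous_on_powser_circle[OF sv] continuous_intros)
  moreover have "(\<Sum>n. u n * (2*pi * v n)) = 2*pi * (\<Sum>n. u n * v n)"
    using suminf_mult[OF summable_mult_of_summable_norm[OF su sv], of "2*pi"] by (simp add: mult_ac)
  ultimately have PQ: "((\<lambda>t. P t * Q t) has_integral 2*pi * (\<Sum>n. u n * v n)) {0..2*pi}" by simp
  have "((\<lambda>t. P t * Qc t) has_integral (\<Sum>n. u n * (if n = 0 then 2*pi * cnj (v 0) else 0))) {0..2*pi}"
    unfolding P_def Qc_def
    by (rule has_integral_powser_circle_mult[OF su _ norm_powser_circle_le[OF svc]
          has_integral_fourier_coeff_conj[OF svc]])
       (auto intro!: continuous_on_powser_circle[OF svc] continuous_intros)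
  moreover have "(\<lambda>n. u n * (if n = 0 then 2*pi * cnj (v 0) else 0)) = (\<lambda>n. if n = 0 then 2*pi * u 0 else 0)"
    using v0 by (auto simp: fun_eq_iff)
  ultimately have PQc: "((\<lambda>t. P t * Qc t) has_integral 2*pi * u 0) {0..2*pi}"
    using sums_single[of 0 "\<lambda>_. 2*pi * u 0"] by (simp add: sums_iff)
  have P: "(P has_integral 2*pi * u 0) {0..2*pi}"
    using has_integral_fourier_coeff_conj[OF su, of 0] by (simp add: P_def[abs_def])
  have "((\<lambda>t. P t * Q t + P t * Qc t - P t) has_integral 2*pi * (\<Sum>n. u n * v n)) {0..2*pi}"
    using has_integral_diff[OF has_integral_add[OF PQ PQc] P] by simp
  moreover have "P t * Q t + P t * Qc t - P t = P t * of_real (2 * Re (Q t) - 1)" for t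
  proof -
    have "P t * Q t + P t * Qc t - P t = P t * (Q t + cnj (Q t) - 1)" by (simp add: Qc_eq algebra_simps)
    then show ?thesis by (simp add: complex_add_cnj)
  qed
  ultimately show ?thesis by (simp add: P_def Q_def)
qed

lemma summable_norm_powser_inside_disc:
  fixes p :: "nat \<Rightarrow> complex"
  assumes "\<And>\<zeta>. norm \<zeta> < 1 \<Longrightarrow> summable (\<lambda>n. p n * \<zeta>^n)" and "norm z < 1"
  shows "summable (\<lambda>n. norm (p n * z^n))"
proof (rule powser_insidea[OF assms(1)])
  have "0 \<le> norm z" by simp
  with assms(2) show "norm (of_real ((norm z + 1)/2) :: complex) < 1" "norm z < norm (of_real ((norm z + 1)/2) :: complex)"
    by simp_all
qed

lemma has_integral_kernel_mass:
  fixes v :: "nat \<Rightarrow> complex"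
  assumes sv: "summable (\<lambda>n. norm (v n))" and v0: "v 0 = 1"
  shows "((\<lambda>t. 2 * Re (\<Sum>n. v n * cis t ^ n) - 1) has_integral 2*pi) {0..2*pi}"
proof -
  define \<delta> where "\<delta> n = (if n = 0 then 1 else 0 :: complex)" for n :: nat
  have \<delta>: "(\<lambda>n. \<delta> n * f n) sums f 0" for f :: "nat \<Rightarrow> complex"
  proof -
    have "(\<lambda>n. \<delta> n * f n) = (\<lambda>n. if n = 0 then f 0 else 0)" by (auto simp: \<delta>_def fun_eq_iff)
    then show ?thesis using sums_single[of 0 "\<lambda>_. f 0"] by simp
  qed
  have "(\<lambda>n. norm (\<delta> n)) = (\<lambda>n. if n = 0 then 1 else 0)" by (auto simp: \<delta>_def)
  then have "summable (\<lambda>n. norm (\<delta> n))" using summable_single[of 0 "\<lambda>_. 1::real"] by presburger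
  from has_integral_hadamard_kernel[OF this sv v0]
  have "((\<lambda>t. of_real (2 * Re (\<Sum>n. v n * cis t ^ n) - 1) :: complex) has_integral 2*pi) {0..2*pi}"
    using \<delta> by (simp add: sums_iff v0 del: of_real_diff of_real_mult)
  from has_integral_linear[OF this bounded_linear_Re] show ?thesis by (simp add: o_def)
qed

lemma Re_pos_of_has_integral_kernel:
  fixes P :: "real \<Rightarrow> complex" and K :: "real \<Rightarrow> real"
  assumes P: "continuous_on {a..b} P" "\<And>t. t \<in> {a..b} \<Longrightarrow> 0 < Re (P t)"
    and K: "\<And>t. t \<in> {a..b} \<Longrightarrow> 0 \<le> K t" "(K has_integral m) {a..b}" "0 < m"
    and PK: "((\<lambda>t. P t * of_real (K t)) has_integral I) {a..b}" and "a \<le> b"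
  shows "0 < Re I"
proof -
  have "continuous_on {a..b} (\<lambda>t. Re (P t))" by (intro continuous_intros P)
  then obtain t0 where t0: "t0 \<in> {a..b}" "\<And>t. t \<in> {a..b} \<Longrightarrow> Re (P t0) \<le> Re (P t)"
    using continuous_attains_inf[of "{a..b}"] \<open>a \<le> b\<close> by fastforce
  from has_integral_linear[OF PK bounded_linear_Re]
  have "((\<lambda>t. Re (P t) * K t) has_integral Re I) {a..b}" by (simp add: o_def)
  then have "Re (P t0) * m \<le> Re I"
    by (rule has_integral_le[OF has_integral_mult_right[OF K(2)]])
       (use t0 K(1) in \<open>auto intro: mult_right_mono\<close>)
  moreover have "0 < Re (P t0) * m" using P(2)[OF t0(1)] K(3) by simp
  ultimately show ?thesis by linarith
qed

lemma Re_hadamard_powser_pos: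
  fixes p q :: "nat \<Rightarrow> complex"
  assumes sp: "\<And>\<zeta>. norm \<zeta> < 1 \<Longrightarrow> summable (\<lambda>n. p n * \<zeta>^n)"
    and sq: "\<And>\<zeta>. norm \<zeta> < 1 \<Longrightarrow> summable (\<lambda>n. q n * \<zeta>^n)"
    and p_pos: "\<And>\<zeta>. norm \<zeta> < 1 \<Longrightarrow> 0 < Re (\<Sum>n. p n * \<zeta>^n)"
    and q_half: "\<And>\<zeta>. norm \<zeta> < 1 \<Longrightarrow> 1/2 \<le> Re (\<Sum>n. q n * \<zeta>^n)"
    and q0: "q 0 = 1" and w: "norm w < 1"
  shows "0 < Re (\<Sum>n. p n * q n * w^n)"
proof -
  define r :: real where "r = (norm w + 1) / 2"
  have r: "norm w < r" "r < 1" "0 < r"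
    using w norm_ge_zero[of w] by (auto simp: r_def simp del: norm_ge_zero)
  define z where "z = w / of_real r"
  have z: "norm z < 1" using r by (simp add: z_def norm_divide)
  define u where "u n = p n * z^n" for n
  define v where "v n = q n * of_real r ^ n" for n
  have su: "summable (\<lambda>n. norm (u n))"
    unfolding u_def by (rule summable_norm_powser_inside_disc[OF sp z])
  have r1: "norm (of_real r :: complex) < 1" using r by simp
  have sv: "summable (\<lambda>n. norm (v n))"
    unfolding v_def by (rule summable_norm_powser_inside_disc[OF sq r1])
  define P where "P t = (\<Sum>n. u n * cis (-t) ^ n)" for t
  define K where "K t = 2 * Re (\<Sum>n. v n * cis t ^ n) - 1" for t
  have K: "0 \<le> K t" for t
  proof -
    have "norm (of_real r * cis t) < 1" using r by (simp add: norm_mult)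
    from q_half[OF this] show ?thesis by (simp add: K_def v_def power_mult_distrib mult.assoc)
  qed
  have v0: "v 0 = 1" by (simp add: v_def q0)
  have "(\<Sum>n. u n * v n) = (\<Sum>n. p n * q n * w^n)"
    using r by (simp add: u_def v_def z_def power_mult_distrib power_divide mult_ac)
  then have PK: "((\<lambda>t. P t * of_real (K t)) has_integral 2*pi * (\<Sum>n. p n * q n * w^n)) {0..2*pi}"
    using has_integral_hadamard_kernel[OF su sv v0] by (simp add: P_def K_def)
  have P_cont: "continuous_on {0..2*pi} P"
    unfolding P_def by (rule continuous_on_powser_circle[OF su]) (auto intro!: continuous_intros)
  have P_pos: "0 < Re (P t)" for t
  proof -
    have "P t = (\<Sum>n. p n * (z * cis (-t))^n)"
      by (simp add: P_def u_def power_mult_distrib mult.assoc)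
    moreover have "norm (z * cis (-t)) < 1" using z by (simp add: norm_mult)
    ultimately show ?thesis using p_pos by simp
  qed
  have K_mass: "(K has_integral 2*pi) {0..2*pi}"
    unfolding K_def by (rule has_integral_kernel_mass[OF sv v0])
  have "0 < Re (2*pi * (\<Sum>n. p n * q n * w^n))"
    by (rule Re_pos_of_has_integral_kernel[OF P_cont P_pos _ K_mass _ PK]) (use K in auto)
  then show ?thesis by (simp add: zero_less_mult_iff)
qed

section \<open>Schwarz-Pick and Julia inequalities\<close>

lemma cmod_one_minus_cnj_mult_sq:
  fixes m w :: complex
  shows "(cmod (1 - cnj m * w))^2 - (cmod (w - m))^2 = (1 - (cmod m)^2) * (1 - (cmod w)^2)"
  by (simp only: cmod_power2) (simp add: algebra_simps power2_eq_square)

lemma Schwarz_Pick_disc: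
  fixes F :: "complex \<Rightarrow> complex"
  assumes hol: "F holomorphic_on ball 0 1" and into: "\<And>z. norm z < 1 \<Longrightarrow> norm (F z) < 1"
    and x: "norm x < 1"
  shows "(1 - (cmod x)^2) * (cmod (1 - cnj (F 0) * F x))^2 \<le> (1 - (cmod (F 0))^2) * (1 - (cmod (F x))^2)"
proof -
  define m where "m = F 0"
  have m: "norm m < 1" unfolding m_def by (rule into) simp
  have den: "1 - cnj m * w \<noteq> 0" if "norm w < 1" for w
  proof
    assume "1 - cnj m * w = 0"
    then have "norm (cnj m * w) = 1" by simp
    moreover have "norm (cnj m * w) < 1"
      using m that by (simp add: norm_mult) (metis mult_strict_mono' norm_ge_zero mult_1_left)
    ultimately show False by simp
  qed
  define S where "S z = (F z - m) / (1 - cnj m * F z)" for z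
  have holS: "S holomorphic_on ball 0 1"
    unfolding S_def by (intro holomorphic_intros hol) (use den into in auto)
  have S_into: "norm (S z) < 1" if "norm z < 1" for z
  proof -
    have Fz: "norm (F z) < 1" using into that .
    have "0 < (cmod (1 - cnj m * F z))^2 - (cmod (F z - m))^2"
      unfolding cmod_one_minus_cnj_mult_sq using m Fz
      by (intro mult_pos_pos) (simp_all add: power_less_one_iff abs_square_less_1)
    then have "cmod (F z - m) < cmod (1 - cnj m * F z)"
      using power_less_imp_less_base by fastforce
    then show ?thesis using den[OF Fz] by (simp add: S_def norm_divide divide_less_eq)
  qed
  have "norm (S x) \<le> norm x"
    using Schwarz_Lemma(1)[OF holS _ _ x] S_into by (auto simp: S_def m_def)
  then have "cmod (F x - m) \<le> cmod x * cmod (1 - cnj m * F x)"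
    using den[OF into[OF x]] by (simp add: S_def norm_divide divide_le_eq)
  then have "(cmod (F x - m))^2 \<le> (cmod x)^2 * (cmod (1 - cnj m * F x))^2"
    by (metis power_mono norm_ge_zero power_mult_distrib)
  then have "(1 - (cmod x)^2) * (cmod (1 - cnj m * F x))^2 \<le> (cmod (1 - cnj m * F x))^2 - (cmod (F x - m))^2"
    by (simp add: algebra_simps)
  also have "\<dots> = (1 - (cmod m)^2) * (1 - (cmod (F x))^2)" by (rule cmod_one_minus_cnj_mult_sq)
  finally show ?thesis by (simp add: m_def)
qed

text \<open>Julia's lemma at the boundary fixed point \<open>1\<close>, for a self-map of the disc that is
  differentiable there with real derivative \<open>d\<close>: the Schwarz-Pick inequality along the radius
  \<open>[0, 1)\<close>, divided by \<open>1 - s\<close>, tends to this inequality as \<open>s \<rightarrow> 1\<close>.\<close>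

lemma Julia_inequality_at_1:
  fixes M :: "complex \<Rightarrow> complex" and d :: real
  assumes hol: "M holomorphic_on ball 0 1" and into: "\<And>z. norm z < 1 \<Longrightarrow> norm (M z) < 1"
    and M1: "M 1 = 1" and dM: "(M has_field_derivative of_real d) (at 1)"
  shows "(cmod (1 - cnj (M 0)))^2 \<le> d * (1 - (cmod (M 0))^2)"
proof -
  define m where "m = M 0"
  define D where "D s = (M (of_real s) - 1) / (of_real s - 1)" for s :: real
  have D: "(D \<longlongrightarrow> of_real d) (at_left 1)"
  proof -
    have "((\<lambda>y. (M y - M 1) / (y - 1)) \<longlongrightarrow> of_real d) (at 1)"
      using dM by (simp add: has_field_derivative_iff)
    moreover have "filterlim (\<lambda>s::real. complex_of_real s) (at 1) (at_left 1)"
      unfolding filterlim_at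
      using tendsto_of_real[OF tendsto_ident_at[of "1::real" "{..<1}"]]
      by (auto simp: eventually_at_left_field intro!: exI[of _ 0])
    ultimately show ?thesis
      using filterlim_compose[of "\<lambda>y. (M y - 1) / (y - 1)"] by (simp add: D_def[abs_def] M1)
  qed
  have norm_sq: "1 - (cmod (1 + (complex_of_real s - 1) * c))^2 = (1 - s) * (2 * Re c - (1 - s) * (cmod c)^2)"
    for s c by (simp only: cmod_power2) (simp add: algebra_simps power2_eq_square)
  have "\<forall>\<^sub>F s in at_left 1. 0 < s \<and> s < (1::real)"
    by (auto simp: eventually_at_left_field intro!: exI[of _ 0])
  then have "\<forall>\<^sub>F s in at_left 1. (1 + s) * (cmod (1 - cnj m * (1 + (of_real s - 1) * D s)))^2
          \<le> (1 - (cmod m)^2) * (2 * Re (D s) - (1 - s) * (cmod (D s))^2)"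
  proof eventually_elim
    case (elim s)
    then have M_s: "M (of_real s) = 1 + (of_real s - 1) * D s"
      by (simp add: D_def)
    have "(1 - s) * ((1 + s) * (cmod (1 - cnj m * (1 + (of_real s - 1) * D s)))^2)
            = (1 - s^2) * (cmod (1 - cnj m * M (of_real s)))^2"
      by (simp add: M_s power2_eq_square algebra_simps)
    also have "\<dots> \<le> (1 - (cmod m)^2) * (1 - (cmod (M (of_real s)))^2)"
      using Schwarz_Pick_disc[OF hol into, of "of_real s"] elim by (simp add: m_def)
    also have "\<dots> = (1 - s) * ((1 - (cmod m)^2) * (2 * Re (D s) - (1 - s) * (cmod (D s))^2))"
      by (simp add: M_s norm_sq)
    finally show ?case using elim by (simp add: mult_le_cancel_left_pos)
  qed
  moreover have "((\<lambda>s. (1 + s) * (cmod (1 - cnj m * (1 + (of_real s - 1) * D s)))^2) \<longlongrightarrow>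
                  (1 + 1) * (cmod (1 - cnj m * (1 + (of_real 1 - 1) * of_real d)))^2) (at_left (1::real))"
    by (intro tendsto_intros D tendsto_ident_at)
  moreover have "((\<lambda>s. (1 - (cmod m)^2) * (2 * Re (D s) - (1 - s) * (cmod (D s))^2)) \<longlongrightarrow>
                  (1 - (cmod m)^2) * (2 * Re (of_real d) - (1 - 1) * (cmod (of_real d :: complex))^2))
                  (at_left (1::real))"
    by (intro tendsto_intros D tendsto_ident_at)
  ultimately have "(1 + 1) * (cmod (1 - cnj m * (1 + (of_real 1 - 1) * of_real d)))^2
                     \<le> (1 - (cmod m)^2) * (2 * Re (of_real d) - (1 - 1) * (cmod (of_real d :: complex))^2)"
    by (intro tendsto_le[OF trivial_limit_at_left_real])
  then have "2 * (cmod (1 - cnj m))^2 \<le> 2 * (d * (1 - (cmod m)^2))"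
    by (simp add: mult_ac)
  then show ?thesis by (simp add: m_def)
qed

section \<open>Convex univalent functions\<close>

text \<open>Study's theorem, in the form: a convex univalent map sends every smaller centred disc onto a
  convex set. For \<open>|x| \<le> |y|\<close>, the map \<open>\<zeta> \<mapsto> f\<^sup>-\<^sup>1 (u f(\<zeta> x/y) + v f(\<zeta>))\<close> fixes \<open>0\<close> and maps the
  disc into itself, so by Schwarz's lemma its value at \<open>y\<close> stays in the disc of radius \<open>|y|\<close>.\<close>

lemma convex_combination_in_image_ball:
  fixes f :: "complex \<Rightarrow> complex"
  assumes hol: "f holomorphic_on ball 0 1" and inj: "inj_on f (ball 0 1)" and f0: "f 0 = 0"
    and cv: "convex (f ` ball 0 1)" and r: "r \<le> 1"
    and x: "x \<in> ball 0 r" and y: "y \<in> ball 0 r" and xy: "norm x \<le> norm y"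
    and u: "0 \<le> u" and v: "0 \<le> v" and uv: "u + v = 1"
  shows "u *\<^sub>R f x + v *\<^sub>R f y \<in> f ` ball 0 r"
proof (cases "y = 0")
  case True
  with xy have "x = 0" by simp
  with True x uv f0 show ?thesis
    by (auto simp: scaleR_conv_of_real simp flip: distrib_right intro!: image_eqI[of _ _ 0])
next
  case False
  obtain g where holg: "g holomorphic_on (f ` ball 0 1)" and gf: "\<And>z. z \<in> ball 0 1 \<Longrightarrow> g (f z) = z"
    using holomorphic_has_inverse[OF hol open_ball inj] by metis
  define c where "c = x / y"
  have c: "norm c \<le> 1" using xy False by (simp add: c_def norm_divide divide_le_eq)
  have cz: "c * z \<in> ball 0 1" if "z \<in> ball 0 1" for z
  proof -
    have "norm c * norm z \<le> 1 * norm z" using c by (intro mult_right_mono) auto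
    then show ?thesis using that by (simp add: norm_mult)
  qed
  define G where "G z = of_real u * f (c * z) + of_real v * f z" for z
  have G: "G z \<in> f ` ball 0 1" if "z \<in> ball 0 1" for z
    using convexD[OF cv imageI[OF cz[OF that]] imageI[OF that] u v uv]
    by (simp add: G_def scaleR_conv_of_real)
  have "G holomorphic_on ball 0 1"
    unfolding G_def
    by (intro holomorphic_intros holomorphic_on_compose_gen[OF _ hol, unfolded o_def] hol) (use cz in auto)
  then have hol\<omega>: "(g \<circ> G) holomorphic_on ball 0 1"
    by (rule holomorphic_on_compose_gen[OF _ holg]) (use G in auto)
  have \<omega>: "norm ((g \<circ> G) z) < 1 \<and> f ((g \<circ> G) z) = G z" if "norm z < 1" for z
    using G[of z] that gf by auto
  have "G 0 = f 0" using uv by (simp add: G_def f0 flip: distrib_right)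
  then have "(g \<circ> G) 0 = 0" using gf[of 0] by simp
  moreover have ny: "norm y < 1" using y r by auto
  ultimately have "norm ((g \<circ> G) y) \<le> norm y"
    using Schwarz_Lemma(1)[OF hol\<omega>] \<omega> by blast
  then have "(g \<circ> G) y \<in> ball 0 r" using y by auto
  moreover have "f ((g \<circ> G) y) = u *\<^sub>R f x + v *\<^sub>R f y"
    using \<omega>[OF ny] False by (simp add: G_def c_def scaleR_conv_of_real)
  ultimately show ?thesis by (metis imageI)
qed

lemma convex_image_ball:
  fixes f :: "complex \<Rightarrow> complex"
  assumes "f holomorphic_on ball 0 1" and "inj_on f (ball 0 1)" and "f 0 = 0"
    and "convex (f ` ball 0 1)" and "r \<le> 1"
  shows "convex (f ` ball 0 r)"
proof (rule convexI)
  fix a b :: complex and u v :: real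
  assume a: "a \<in> f ` ball 0 r" and b: "b \<in> f ` ball 0 r" and "0 \<le> u" "0 \<le> v" "u + v = 1"
  then obtain x y where x: "x \<in> ball 0 r" "a = f x" and y: "y \<in> ball 0 r" "b = f y" by auto
  show "u *\<^sub>R a + v *\<^sub>R b \<in> f ` ball 0 r"
  proof (cases "norm x \<le> norm y")
    case True
    then show ?thesis using convex_combination_in_image_ball[OF assms x(1) y(1)] x y \<open>0 \<le> u\<close> \<open>0 \<le> v\<close> \<open>u + v = 1\<close>
      by simp
  next
    case False
    then show ?thesis using convex_combination_in_image_ball[OF assms y(1) x(1), of v u] x y \<open>0 \<le> u\<close> \<open>0 \<le> v\<close> \<open>u + v = 1\<close>
      by (simp add: add.commute)
  qed
qed

lemma Re_ge_of_cmod_one_minus_cnj_le: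
  fixes m :: complex and t :: real
  assumes "(cmod (1 - cnj m))^2 \<le> (1 - t) * (1 - (cmod m)^2)" and "t < 1"
  shows "t / 2 \<le> Re m"
proof -
  have "(1 - Re m)^2 + (Im m)^2 \<le> (1 - t) * (1 - ((Re m)^2 + (Im m)^2))"
    using assms(1) by (simp only: cmod_power2) simp
  moreover have "0 \<le> ((Re m)^2 + (Im m)^2) * (2 - t)" using assms(2) by (intro mult_nonneg_nonneg) auto
  ultimately show ?thesis by (simp add: algebra_simps power2_eq_square)
qed

lemma convex_univalent_segment_to_boundary:
  fixes \<psi> :: "complex \<Rightarrow> complex" and R t :: real
  assumes R: "1 < R" and hol: "\<psi> holomorphic_on ball 0 R" and inj: "inj_on \<psi> (ball 0 R)"
    and cv: "convex (\<psi> ` ball 0 1)" and \<zeta>: "\<zeta> \<in> ball 0 1" and t: "0 < t" "t < 1"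
  shows "of_real (1 - t) * \<psi> \<zeta> + of_real t * \<psi> 1 \<in> \<psi> ` ball 0 1"
proof -
  define V where "V = \<psi> ` ball 0 1"
  have sub: "ball 0 1 \<subseteq> ball 0 R" and one: "(1::complex) \<in> ball 0 R" using R by auto
  have oV: "open V" unfolding V_def
    by (rule open_mapping_thm3[OF holomorphic_on_subset[OF hol sub] open_ball inj_on_subset[OF inj sub]])
  have "continuous_on (closure (ball 0 1)) \<psi>"
    using R by (intro holomorphic_on_imp_continuous_on holomorphic_on_subset[OF hol]) auto
  then have "\<psi> ` closure (ball 0 1) \<subseteq> closure V"
    by (intro image_closure_subset) (auto simp: V_def closure_subset[THEN subsetD])
  then have a_cl: "\<psi> 1 \<in> closure V" by auto
  have "\<psi> \<zeta> \<noteq> \<psi> 1" using inj_onD[OF inj _ subsetD[OF sub \<zeta>] one] \<zeta> by auto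
  then have "of_real (1 - t) * \<psi> \<zeta> + of_real t * \<psi> 1 \<in> open_segment (\<psi> \<zeta>) (\<psi> 1)"
    using t by (auto simp: in_segment scaleR_conv_of_real intro!: exI[of _ t])
  moreover have "\<psi> \<zeta> \<in> interior V" using oV \<zeta> by (simp add: interior_open V_def)
  ultimately have "of_real (1 - t) * \<psi> \<zeta> + of_real t * \<psi> 1 \<in> interior V"
    using in_interior_closure_convex_segment[OF cv[folded V_def] _ a_cl] by blast
  then show ?thesis using oV by (simp add: interior_open V_def)
qed

text \<open>The segment
  from \<open>\<psi>(\<zeta>)\<close> towards the boundary point \<open>a = \<psi>(1)\<close> stays in the convex set \<open>\<psi>(\<bbbD>)\<close>, so
  \<open>M(\<zeta>) = g((1 - t) \<psi>(\<zeta>) + t a)\<close> is a self-map of the disc with \<open>M(1) = 1\<close> and \<open>M'(1) = 1 - t\<close>;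
  Julia's inequality for \<open>M\<close> at \<open>M(0) = g(t a)\<close> gives the bound.\<close>

lemma Re_inverse_convex_segment_ge:
  fixes \<psi> g :: "complex \<Rightarrow> complex" and R t :: real
  assumes R: "1 < R" and hol: "\<psi> holomorphic_on ball 0 R" and inj: "inj_on \<psi> (ball 0 R)"
    and \<psi>0: "\<psi> 0 = 0" and cv: "convex (\<psi> ` ball 0 1)"
    and holg: "g holomorphic_on \<psi> ` ball 0 R" and g\<psi>: "\<And>z. z \<in> ball 0 R \<Longrightarrow> g (\<psi> z) = z"
    and dg: "\<And>z. z \<in> ball 0 R \<Longrightarrow> deriv \<psi> z * deriv g (\<psi> z) = 1"
    and t: "0 < t" "t < 1"
  shows "t / 2 \<le> Re (g (of_real t * \<psi> 1))"
proof -
  define a where "a = \<psi> 1"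
  have sub: "ball 0 1 \<subseteq> ball 0 R" and one: "(1::complex) \<in> ball 0 R" using R by auto
  define w where "w \<zeta> = of_real (1 - t) * \<psi> \<zeta> + of_real t * a" for \<zeta>
  have w_in: "w \<zeta> \<in> \<psi> ` ball 0 1" if "\<zeta> \<in> ball 0 1" for \<zeta>
    unfolding w_def a_def by (rule convex_univalent_segment_to_boundary[OF R hol inj cv that t])
  define M where "M = g \<circ> w"
  have hol_w: "w holomorphic_on ball 0 R" unfolding w_def by (intro holomorphic_intros hol)
  have "\<psi> ` ball 0 1 \<subseteq> \<psi> ` ball 0 R" using sub by auto
  with w_in have "M holomorphic_on ball 0 1"
    unfolding M_def by (intro holomorphic_on_compose_gen[OF holomorphic_on_subset[OF hol_w sub] holg]) auto
  moreover have "norm (M \<zeta>) < 1" if "norm \<zeta> < 1" for \<zeta>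
    using w_in[of \<zeta>] that g\<psi> sub by (auto simp: M_def)
  moreover have w1: "w 1 = a" by (simp add: w_def a_def[symmetric] algebra_simps)
  then have "M 1 = 1" using g\<psi>[OF one] by (simp add: M_def a_def)
  moreover have "(M has_field_derivative of_real (1 - t)) (at 1)"
  proof -
    have "open (\<psi> ` ball 0 R)" by (rule open_mapping_thm3[OF hol open_ball inj])
    then have "(g has_field_derivative deriv g a) (at (w 1))"
      using holomorphic_derivI[OF holg] one by (auto simp: w1 a_def)
    moreover have "(w has_field_derivative of_real (1 - t) * deriv \<psi> 1) (at 1)"
      unfolding w_def by (auto intro!: derivative_eq_intros holomorphic_derivI[OF hol open_ball one])
    ultimately have "(M has_field_derivative deriv g a * (of_real (1 - t) * deriv \<psi> 1)) (at 1)"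
      unfolding M_def by (rule DERIV_chain)
    then show ?thesis using dg[OF one] by (simp add: a_def algebra_simps)
  qed
  ultimately have "(cmod (1 - cnj (M 0)))^2 \<le> (1 - t) * (1 - (cmod (M 0))^2)"
    by (rule Julia_inequality_at_1)
  then show ?thesis
    using Re_ge_of_cmod_one_minus_cnj_le t by (simp add: M_def w_def \<psi>0 a_def)
qed

text \<open>Letting \<open>t \<rightarrow> 0\<close> in the previous bound, using \<open>g(t a) / t \<rightarrow> a g'(0) = a\<close>.\<close>

lemma Re_convex_univalent_at_1_ge:
  fixes \<psi> :: "complex \<Rightarrow> complex" and R :: real
  assumes R: "1 < R" and hol: "\<psi> holomorphic_on ball 0 R" and inj: "inj_on \<psi> (ball 0 R)"
    and \<psi>0: "\<psi> 0 = 0" and d\<psi>0: "deriv \<psi> 0 = 1" and cv: "convex (\<psi> ` ball 0 1)"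
  shows "1/2 \<le> Re (\<psi> 1)"
proof -
  obtain g where holg: "g holomorphic_on \<psi> ` ball 0 R"
    and dg: "\<And>z. z \<in> ball 0 R \<Longrightarrow> deriv \<psi> z * deriv g (\<psi> z) = 1"
    and g\<psi>: "\<And>z. z \<in> ball 0 R \<Longrightarrow> g (\<psi> z) = z"
    using holomorphic_has_inverse[OF hol open_ball inj] by metis
  define a where "a = \<psi> 1"
  have zero: "(0::complex) \<in> ball 0 R" and one: "(1::complex) \<in> ball 0 R" using R by auto
  have a0: "a \<noteq> 0" using inj_onD[OF inj _ one zero] \<psi>0 by (auto simp: a_def)
  have "(g has_field_derivative 1) (at 0)"
  proof -
    have "open (\<psi> ` ball 0 R)" by (rule open_mapping_thm3[OF hol open_ball inj])
    then show ?thesis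
      using holomorphic_derivI[OF holg, of 0] dg[OF zero] zero \<psi>0 d\<psi>0 by force
  qed
  then have g_quot: "((\<lambda>y. g y / y) \<longlongrightarrow> 1) (at 0)"
    using g\<psi>[OF zero] \<psi>0 by (simp add: has_field_derivative_iff)
  have "filterlim (\<lambda>t::real. of_real t * a) (at 0) (at_right 0)"
    unfolding filterlim_at
    using a0 tendsto_mult_right[OF tendsto_of_real[OF tendsto_ident_at[of "0::real" "{0<..}"]], of a]
    by (auto simp: eventually_at_right_field intro!: exI[of _ 1])
  then have "((\<lambda>t. Re (a * (g (of_real t * a) / (of_real t * a)))) \<longlongrightarrow> Re (a * 1)) (at_right 0)"
    by (intro tendsto_intros filterlim_compose[OF g_quot])
  moreover have "\<forall>\<^sub>F t in at_right 0. 1/2 \<le> Re (a * (g (of_real t * a) / (of_real t * a)))"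
  proof -
    have "\<forall>\<^sub>F t in at_right 0. 0 < t \<and> t < (1::real)"
      by (auto simp: eventually_at_right_field intro!: exI[of _ 1])
    then show ?thesis
    proof eventually_elim
      case (elim t)
      have "Re (a * (g (of_real t * a) / (of_real t * a))) = Re (g (of_real t * a)) / t"
        using a0 elim by simp
      moreover have "t / 2 \<le> Re (g (of_real t * a))"
        using Re_inverse_convex_segment_ge[OF R hol inj \<psi>0 cv holg g\<psi> dg] elim by (simp add: a_def)
      ultimately show ?case using elim a0 by (simp add: field_simps)
    qed
  qed
  ultimately have "1/2 \<le> Re (a * 1)"
    by (rule tendsto_le[OF trivial_limit_at_right_real _ tendsto_const])
  then show ?thesis by (simp add: a_def)
qed

lemma mult_image_ball_0:
  fixes c :: complex
  assumes "c \<noteq> 0"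
  shows "(*) c ` ball 0 r = ball 0 (norm c * r)"
proof (intro equalityI subsetI)
  fix y :: complex assume "y \<in> ball 0 (norm c * r)"
  then have "y / c \<in> ball 0 r" "y = c * (y / c)"
    using assms by (auto simp: norm_divide field_simps)
  then show "y \<in> (*) c ` ball 0 r" by blast
qed (use assms in \<open>auto simp: norm_mult\<close>)

text \<open>Rescaling: \<open>\<psi>(\<zeta>) = \<phi>(z \<zeta>) / z\<close> is univalent on the disc of radius \<open>1/|z| > 1\<close> and, by
  Study's theorem, maps the unit disc onto a convex set; and \<open>\<psi>(1) = \<phi>(z) / z\<close>.\<close>

lemma Re_convex_univalent_div_ge:
  fixes \<phi> :: "complex \<Rightarrow> complex"
  assumes nc: "normalized_convex_univalent \<phi>" and z: "norm z < 1" "z \<noteq> 0"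
  shows "1/2 \<le> Re (\<phi> z / z)"
proof -
  have hol: "\<phi> holomorphic_on ball 0 1" and \<phi>0: "\<phi> 0 = 0" and d\<phi>0: "deriv \<phi> 0 = 1"
    and inj: "inj_on \<phi> (ball 0 1)" and cv: "convex (\<phi> ` ball 0 1)"
    using nc by (auto simp: normalized_convex_univalent_def)
  define R where "R = 1 / norm z"
  have R: "1 < R" using z by (simp add: R_def)
  define \<psi> where "\<psi> \<zeta> = \<phi> (z * \<zeta>) / z" for \<zeta>
  have scale_R: "(*) z ` ball 0 R = ball 0 1" and scale_1: "(*) z ` ball 0 1 = ball 0 (norm z)"
    using z by (simp_all add: mult_image_ball_0 R_def)
  have "(\<phi> \<circ> (*) z) holomorphic_on ball 0 R"
    by (rule holomorphic_on_compose_gen[OF _ hol]) (auto intro!: holomorphic_intros simp flip: scale_R)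
  then have "\<psi> holomorphic_on ball 0 R"
    unfolding \<psi>_def[abs_def] o_def by (intro holomorphic_intros) (use z in auto)
  moreover have "inj_on \<psi> (ball 0 R)"
    using inj z(2) by (auto simp: inj_on_def \<psi>_def simp flip: scale_R)
  moreover have "\<psi> 0 = 0" by (simp add: \<psi>_def \<phi>0)
  moreover have "deriv \<psi> 0 = 1"
  proof -
    have "(\<phi> has_field_derivative deriv \<phi> 0) (at (z * 0))"
      using holomorphic_derivI[OF hol open_ball, of 0] by simp
    moreover have "((*) z has_field_derivative z) (at 0)" by (auto intro!: derivative_eq_intros)
    ultimately have "((\<lambda>\<zeta>. \<phi> (z * \<zeta>)) has_field_derivative deriv \<phi> 0 * z) (at 0)"
      by (rule DERIV_chain2)
    then have "(\<psi> has_field_derivative deriv \<phi> 0 * z / z) (at 0)"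
      unfolding \<psi>_def[abs_def] by (rule DERIV_cdivide)
    then show ?thesis using z d\<phi>0 by (simp add: DERIV_imp_deriv)
  qed
  moreover have "convex (\<psi> ` ball 0 1)"
  proof -
    have "\<psi> ` ball 0 1 = (\<lambda>w. w / z) ` (\<phi> ` ball 0 (norm z))"
      by (simp add: image_image \<psi>_def flip: scale_1)
    then show ?thesis
      using convex_image_ball[OF hol inj \<phi>0 cv, of "norm z"] z
      by (simp add: convex_linear_image[OF bounded_linear.linear[OF bounded_linear_divide]])
  qed
  ultimately have "1/2 \<le> Re (\<psi> 1)" by (rule Re_convex_univalent_at_1_ge[OF R])
  then show ?thesis by (simp add: \<psi>_def)
qed

section \<open>Power series on the unit disc\<close>

lemma has_field_derivative_powser_disc:
  fixes c :: "nat \<Rightarrow> complex"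
  assumes "\<And>z. norm z < 1 \<Longrightarrow> summable (\<lambda>n. c n * z^n)" and "norm z < 1"
  shows "((\<lambda>z. \<Sum>n. c n * z^n) has_field_derivative (\<Sum>n. diffs c n * z^n)) (at z)"
  by (rule termdiffs_strong'[of 1]) (use assms in auto)

lemma summable_diffs_powser_disc:
  fixes c :: "nat \<Rightarrow> complex"
  assumes "\<And>z. norm z < 1 \<Longrightarrow> summable (\<lambda>n. c n * z^n)" and "norm z < 1"
  shows "summable (\<lambda>n. diffs c n * z^n)"
  by (rule termdiff_converges[of z 1]) (use assms in auto)

lemma deriv_powser_disc:
  fixes c :: "nat \<Rightarrow> complex"
  assumes sc: "\<And>z. norm z < 1 \<Longrightarrow> summable (\<lambda>n. c n * z^n)"
    and F: "\<And>z. norm z < 1 \<Longrightarrow> F z = (\<Sum>n. c n * z^n)" and z: "norm z < 1"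
  shows "deriv F z = (\<Sum>n. diffs c n * z^n)"
proof (rule DERIV_imp_deriv)
  show "(F has_field_derivative (\<Sum>n. diffs c n * z^n)) (at z)"
    by (rule has_field_derivative_transform_within_open[OF has_field_derivative_powser_disc[OF sc z],
          of "ball 0 1"]) (use z F in auto)
qed

lemma powser_disc_holomorphic_deriv0:
  fixes c :: "nat \<Rightarrow> complex"
  assumes sc: "\<And>z. norm z < 1 \<Longrightarrow> summable (\<lambda>n. c n * z^n)"
  shows "(\<lambda>z. \<Sum>n. c n * z^n) holomorphic_on ball 0 1"
    and "deriv (\<lambda>z. \<Sum>n. c n * z^n) 0 = c 1"
proof -
  show "(\<lambda>z. \<Sum>n. c n * z^n) holomorphic_on ball 0 1"
    by (subst holomorphic_on_open) (auto intro!: exI has_field_derivative_powser_disc[OF sc])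
  have "deriv (\<lambda>z. \<Sum>n. c n * z^n) 0 = (\<Sum>n. diffs c n * 0^n)"
    by (rule deriv_powser_disc[OF sc]) auto
  then show "deriv (\<lambda>z. \<Sum>n. c n * z^n) 0 = c 1" by (simp add: diffs_def)
qed

definition W_operator :: "real \<Rightarrow> (complex \<Rightarrow> complex) \<Rightarrow> complex \<Rightarrow> complex" where
  "W_operator \<alpha> F z = deriv F z + of_real \<alpha> * z * deriv (deriv F) z"

lemma W_operator_powser_disc:
  fixes c :: "nat \<Rightarrow> complex"
  assumes sc: "\<And>z. norm z < 1 \<Longrightarrow> summable (\<lambda>n. c n * z^n)"
    and F: "\<And>z. norm z < 1 \<Longrightarrow> F z = (\<Sum>n. c n * z^n)" and z: "norm z < 1"
  shows "(\<lambda>n. ((1 + of_real \<alpha> * of_nat n) * diffs c n) * z^n) sums W_operator \<alpha> F z"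
proof -
  have sc1: "\<And>z. norm z < 1 \<Longrightarrow> summable (\<lambda>n. diffs c n * z^n)"
    by (rule summable_diffs_powser_disc[OF sc])
  have F': "\<And>z. norm z < 1 \<Longrightarrow> deriv F z = (\<Sum>n. diffs c n * z^n)"
    by (rule deriv_powser_disc[OF sc F])
  have F'': "deriv (deriv F) z = (\<Sum>n. diffs (diffs c) n * z^n)"
    by (rule deriv_powser_disc[OF sc1 F' z])
  define d where "d n = of_nat n * diffs c n" for n
  have d_Suc: "d (Suc n) = diffs (diffs c) n" for n by (simp add: d_def diffs_def)
  have "summable (\<lambda>n. d (Suc n) * z^n)"
    using summable_diffs_powser_disc[OF sc1 z] by (simp add: d_Suc)
  then have sd: "summable (\<lambda>n. d n * z^n)" by (simp only: summable_powser_split_head)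
  have "z * deriv (deriv F) z = (\<Sum>n. d n * z^n)"
    using powser_split_head(1)[OF sd] by (simp add: F'' d_Suc d_def[of 0] mult.commute)
  then have "(\<lambda>n. of_real \<alpha> * (d n * z^n)) sums (of_real \<alpha> * z * deriv (deriv F) z)"
    using sums_mult[OF summable_sums[OF sd], of "of_real \<alpha>"] by (simp add: mult.assoc)
  moreover have "(\<lambda>n. diffs c n * z^n) sums deriv F z"
    using summable_sums[OF sc1[OF z]] F'[OF z] by simp
  ultimately have "(\<lambda>n. diffs c n * z^n + of_real \<alpha> * (d n * z^n)) sums W_operator \<alpha> F z"
    unfolding W_operator_def by (rule sums_add[rotated])
  then show ?thesis by (simp add: d_def algebra_simps)
qed

lemma taylor_coeff_sums:
  assumes "f holomorphic_on ball 0 1" and "norm z < 1"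
  shows "(\<lambda>n. taylor_coeff f n * z^n) sums f z"
  using holomorphic_power_series[OF assms(1), of z] assms(2) by (simp add: taylor_coeff_def)

lemma taylor_coeff_0 [simp]: "taylor_coeff f 0 = f 0"
  by (simp add: taylor_coeff_def)

lemma taylor_coeff_1 [simp]: "taylor_coeff f (Suc 0) = deriv f 0"
  by (simp add: taylor_coeff_def)

lemma summable_hadamard_powser_disc:
  fixes a b :: "nat \<Rightarrow> complex"
  assumes sa: "\<And>z. norm z < 1 \<Longrightarrow> summable (\<lambda>n. a n * z^n)"
    and sb: "\<And>z. norm z < 1 \<Longrightarrow> summable (\<lambda>n. b n * z^n)" and z: "norm z < 1"
  shows "summable (\<lambda>n. a n * b n * z^n)"
proof (rule summable_norm_cancel)
  define s where "s = complex_of_real (sqrt (norm z))"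
  have s: "norm s < 1" using z by (simp add: s_def)
  have "summable (\<lambda>n. norm (a n * s^n) * norm (b n * s^n))"
    by (rule summable_mult_of_summable_norm)
       (simp_all add: summable_norm_powser_inside_disc[OF sa s] summable_norm_powser_inside_disc[OF sb s])
  moreover have "norm (a n * b n * z^n) = norm (a n * s^n) * norm (b n * s^n)" for n
  proof -
    have "norm z ^ n = norm s ^ n * norm s ^ n"
      by (simp add: s_def flip: power_mult_distrib)
    then show ?thesis by (simp add: norm_mult norm_power)
  qed
  ultimately show "summable (\<lambda>n. norm (a n * b n * z^n))" by simp
qed

section \<open>Hadamard products with a convex univalent function\<close>

lemma summable_taylor_coeff:
  assumes "f holomorphic_on ball 0 1" and "norm z < 1"
  shows "summable (\<lambda>n. taylor_coeff f n * z^n)"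
  using taylor_coeff_sums[OF assms] by (rule sums_summable)

lemma hadamard_holomorphic_normalization:
  assumes f: "f holomorphic_on ball 0 1" and \<phi>: "\<phi> holomorphic_on ball 0 1"
  shows "hadamard f \<phi> holomorphic_on ball 0 1" and "hadamard f \<phi> 0 = f 0 * \<phi> 0"
    and "deriv (hadamard f \<phi>) 0 = deriv f 0 * deriv \<phi> 0"
proof -
  have sc: "summable (\<lambda>n. taylor_coeff f n * taylor_coeff \<phi> n * z^n)" if "norm z < 1" for z
    by (rule summable_hadamard_powser_disc[OF summable_taylor_coeff[OF f] summable_taylor_coeff[OF \<phi>] that])
  have eq: "hadamard f \<phi> = (\<lambda>z. \<Sum>n. taylor_coeff f n * taylor_coeff \<phi> n * z^n)"
    by (simp add: fun_eq_iff hadamard_def)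
  show "hadamard f \<phi> holomorphic_on ball 0 1" "hadamard f \<phi> 0 = f 0 * \<phi> 0"
    "deriv (hadamard f \<phi>) 0 = deriv f 0 * deriv \<phi> 0"
    using powser_disc_holomorphic_deriv0[of "\<lambda>n. taylor_coeff f n * taylor_coeff \<phi> n", OF sc] by (simp_all add: eq)
qed

lemma W_operator_taylor_coeff:
  assumes "f holomorphic_on ball 0 1" and z: "norm z < 1"
  shows "(\<lambda>n. (1 + of_real \<alpha> * of_nat n) * diffs (taylor_coeff f) n * z^n) sums W_operator \<alpha> f z"
  using W_operator_powser_disc[OF summable_taylor_coeff[OF assms(1)] _ z]
    taylor_coeff_sums[OF assms(1)] by (simp add: sums_iff)

lemma W_operator_hadamard:
  assumes f: "f holomorphic_on ball 0 1" and \<phi>: "\<phi> holomorphic_on ball 0 1" and z: "norm z < 1"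
  shows "(\<lambda>n. (1 + of_real \<alpha> * of_nat n) * diffs (taylor_coeff f) n * taylor_coeff \<phi> (Suc n) * z^n)
           sums W_operator \<alpha> (hadamard f \<phi>) z"
proof -
  define c where "c n = taylor_coeff f n * taylor_coeff \<phi> n" for n
  have "diffs c n = diffs (taylor_coeff f) n * taylor_coeff \<phi> (Suc n)" for n
    by (simp add: c_def diffs_def mult_ac)
  moreover have "hadamard f \<phi> w = (\<Sum>n. c n * w^n)" for w
    by (simp add: c_def hadamard_def)
  moreover have "summable (\<lambda>n. c n * w^n)" if "norm w < 1" for w
    unfolding c_def
    by (rule summable_hadamard_powser_disc[OF summable_taylor_coeff[OF f] summable_taylor_coeff[OF \<phi>] that])
  ultimately show ?thesis
    using W_operator_powser_disc[of c "hadamard f \<phi>" z \<alpha>] z by (simp add: mult_ac)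
qed

lemma summable_taylor_coeff_shift:
  assumes "f holomorphic_on ball 0 1" and "norm z < 1"
  shows "summable (\<lambda>n. taylor_coeff f (Suc n) * z^n)"
  using summable_taylor_coeff[OF assms] by (simp only: summable_powser_split_head)

lemma Re_taylor_coeff_shift_convex_univalent_ge:
  assumes nc: "normalized_convex_univalent \<phi>" and z: "norm z < 1"
  shows "1/2 \<le> Re (\<Sum>n. taylor_coeff \<phi> (Suc n) * z^n)"
proof (cases "z = 0")
  case False
  have hol: "\<phi> holomorphic_on ball 0 1" and "\<phi> 0 = 0"
    using nc by (auto simp: normalized_convex_univalent_def)
  then have "(\<Sum>n. taylor_coeff \<phi> (Suc n) * z^n) * z = \<phi> z"
    using powser_split_head(2)[OF summable_taylor_coeff[OF hol z]] taylor_coeff_sums[OF hol z]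
    by (simp add: sums_iff)
  then have "(\<Sum>n. taylor_coeff \<phi> (Suc n) * z^n) = \<phi> z / z"
    using False by (simp add: field_simps)
  then show ?thesis using Re_convex_univalent_div_ge[OF nc z False] by simp
qed (use nc in \<open>simp add: normalized_convex_univalent_def\<close>)

lemma sums_powser_lincomb_const:
  fixes X Y :: "nat \<Rightarrow> complex"
  assumes "(\<lambda>n. X n * z^n) sums SX" and "(\<lambda>n. Y n * z^n) sums SY"
  shows "(\<lambda>n. (X n + e * Y n - (if n = 0 then c else 0)) * z^n) sums (SX + e * SY - c)"
proof -
  have "(\<lambda>n. X n * z^n + e * (Y n * z^n) - (if n = 0 then c else 0)) sums (SX + e * SY - c)"
    using sums_single[of 0 "\<lambda>_. c"] by (intro sums_diff sums_add sums_mult assms) simp_all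
  moreover have "(\<lambda>n. (X n + e * Y n - (if n = 0 then c else 0)) * z^n)
                   = (\<lambda>n. X n * z^n + e * (Y n * z^n) - (if n = 0 then c else 0))"
    by (auto simp: fun_eq_iff algebra_simps)
  ultimately show ?thesis by simp
qed

text \<open>Hadamard multiplication by a series \<open>q\<close> with \<open>q\<^sub>0 = 1\<close> and \<open>Re q \<ge> 1/2\<close> preserves an inequality
  \<open>|Y| < Re X - \<beta>\<close>: for every \<open>|\<epsilon>| \<le> 1\<close> the series \<open>X + \<epsilon> Y - \<beta>\<close> has positive real part, hence so
  does its product with \<open>q\<close>, and \<open>\<epsilon>\<close> is finally chosen to rotate the product of \<open>Y\<close> onto the negative
  real axis.\<close>

lemma hadamard_preserves_Re_gt_norm:
  fixes X Y q :: "nat \<Rightarrow> complex" and FX FY :: "complex \<Rightarrow> complex"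
  assumes X: "\<And>\<zeta>. norm \<zeta> < 1 \<Longrightarrow> (\<lambda>n. X n * \<zeta>^n) sums FX \<zeta>"
    and Y: "\<And>\<zeta>. norm \<zeta> < 1 \<Longrightarrow> (\<lambda>n. Y n * \<zeta>^n) sums FY \<zeta>"
    and XY: "\<And>\<zeta>. norm \<zeta> < 1 \<Longrightarrow> norm (FY \<zeta>) < Re (FX \<zeta>) - \<beta>"
    and sq: "\<And>\<zeta>. norm \<zeta> < 1 \<Longrightarrow> summable (\<lambda>n. q n * \<zeta>^n)"
    and q_half: "\<And>\<zeta>. norm \<zeta> < 1 \<Longrightarrow> 1/2 \<le> Re (\<Sum>n. q n * \<zeta>^n)"
    and q0: "q 0 = 1" and z: "norm z < 1"
  shows "norm (\<Sum>n. Y n * q n * z^n) < Re (\<Sum>n. X n * q n * z^n) - \<beta>"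
proof -
  define S where "S = (\<Sum>n. Y n * q n * z^n)"
  define \<epsilon> where "\<epsilon> = (if S = 0 then 1 else - cnj S / of_real (norm S))"
  have \<epsilon>: "norm \<epsilon> \<le> 1" by (simp add: \<epsilon>_def norm_divide)
  have \<epsilon>S: "\<epsilon> * S = - of_real (norm S)"
  proof (cases "S = 0")
    case False
    have "S * cnj S = of_real ((norm S)^2)" by (rule complex_norm_square[symmetric])
    with False show ?thesis by (simp add: \<epsilon>_def power2_eq_square mult.commute)
  qed (simp add: \<epsilon>_def)
  define p where "p n = X n + \<epsilon> * Y n - (if n = 0 then of_real \<beta> else 0)" for n
  have p: "(\<lambda>n. p n * \<zeta>^n) sums (FX \<zeta> + \<epsilon> * FY \<zeta> - of_real \<beta>)" if "norm \<zeta> < 1" for \<zeta>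
    unfolding p_def by (rule sums_powser_lincomb_const[OF X[OF that] Y[OF that]])
  have "0 < Re (\<Sum>n. p n * q n * z^n)"
  proof (rule Re_hadamard_powser_pos[OF _ sq _ q_half q0 z])
    fix \<zeta> :: complex assume \<zeta>: "norm \<zeta> < 1"
    show "summable (\<lambda>n. p n * \<zeta>^n)" using p[OF \<zeta>] by (rule sums_summable)
    have "- Re (\<epsilon> * FY \<zeta>) \<le> norm (FY \<zeta>)"
      using abs_Re_le_cmod[of "\<epsilon> * FY \<zeta>"] mult_left_le_one_le[OF _ _ \<epsilon>, of "norm (FY \<zeta>)"]
      by (simp add: norm_mult)
    then show "0 < Re (\<Sum>n. p n * \<zeta>^n)" using XY[OF \<zeta>] p[OF \<zeta>] by (simp add: sums_iff)
  qed
  moreover have "(\<lambda>n. p n * q n * z^n) sums ((\<Sum>n. X n * q n * z^n) + \<epsilon> * S - of_real \<beta>)"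
  proof -
    have "summable (\<lambda>n. X n * q n * z^n)" "summable (\<lambda>n. Y n * q n * z^n)"
      using summable_hadamard_powser_disc[OF _ sq z] X Y by (metis sums_summable)+
    from sums_powser_lincomb_const[OF this[THEN summable_sums], of \<epsilon> "of_real \<beta>"]
    moreover have "p n * q n = X n * q n + \<epsilon> * (Y n * q n) - (if n = 0 then of_real \<beta> else 0)" for n
      using q0 by (cases "n = 0") (simp_all add: p_def algebra_simps)
    ultimately show ?thesis by (simp add: S_def mult.assoc)
  qed
  ultimately show ?thesis using \<epsilon>S by (simp add: sums_iff S_def)
qed

theorem corollary4p8:
  fixes \<alpha> \<beta> :: real and h g \<phi> :: "complex \<Rightarrow> complex"
  assumes "\<alpha> \<ge> 0" and "0 \<le> \<beta>" and "\<beta> < 1"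
    and "W_H0 \<alpha> \<beta> h g"
    and "normalized_convex_univalent \<phi>"
  shows "W_H0 \<alpha> \<beta> (hadamard h \<phi>) (hadamard g \<phi>)"
proof -
  have h: "h holomorphic_on ball 0 1" and g: "g holomorphic_on ball 0 1"
    and normalized: "h 0 = 0" "deriv h 0 = 1" "g 0 = 0" "deriv g 0 = 0"
    and hg: "\<And>\<zeta>. norm \<zeta> < 1 \<Longrightarrow> norm (W_operator \<alpha> g \<zeta>) < Re (W_operator \<alpha> h \<zeta>) - \<beta>"
    using assms(4) by (auto simp: W_H0_def W_operator_def)
  have \<phi>: "\<phi> holomorphic_on ball 0 1" "\<phi> 0 = 0" "deriv \<phi> 0 = 1"
    using assms(5) by (auto simp: normalized_convex_univalent_def)
  have "norm (W_operator \<alpha> (hadamard g \<phi>) z) < Re (W_operator \<alpha> (hadamard h \<phi>) z) - \<beta>"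
    if z: "norm z < 1" for z
    using hadamard_preserves_Re_gt_norm[OF W_operator_taylor_coeff[OF h] W_operator_taylor_coeff[OF g] hg
        summable_taylor_coeff_shift[OF \<phi>(1)] Re_taylor_coeff_shift_convex_univalent_ge[OF assms(5)] _ z]
      W_operator_hadamard[OF h \<phi>(1) z] W_operator_hadamard[OF g \<phi>(1) z] \<phi>
    by (simp add: sums_iff)
  then show ?thesis
    using hadamard_holomorphic_normalization[OF h \<phi>(1)] hadamard_holomorphic_normalization[OF g \<phi>(1)]
      normalized \<phi> by (simp add: W_H0_def W_operator_def)
qed

end
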